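(* Let $\mathcal G$ be a connected signed graph with normalized signed Laplacian $\mathcal L$. If $\mathcal G$ is structurally unbalanced, then $\lambda_2(\mathcal L)<1$.
   Context: Let $\mathcal G$ be an undirected, connected signed graph on $n$ nodes without self-loops, with symmetric adjacency matrix $A=[a_{ij}]$ having zero diagonal and entries of either sign, where $a_{ij}\ne0$ iff $\{i,j\}$ is an edge. Let $\delta_i=\sum_j|a_{ij}|>0$ and $\Delta=\mathrm{diag}(\delta_i)$. The normalized signed Laplacian is $\mathcal L=I-\Delta^{-1}A$; its eigenvalues are real and ordered $\lambda_1(\mathcal L)\le\dots\le\lambda_n(\mathcal L)$. $\mathcal G$ is structurally balanced if there is a signature matrix $S=\mathrm{diag}(s_i)$, $s_i=\pm1$, such that $SAS$ is entrywise nonnegative; otherwise it is structurally unbalanced. *)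

theory Defs
  imports "Jordan_Normal_Form.Char_Poly" "HOL-Computational_Algebra.Polynomial"
begin

definition signed_graph :: "nat \<Rightarrow> real mat \<Rightarrow> bool" where
  "signed_graph n A \<longleftrightarrow> A \<in> carrier_mat n n \<and> A\<^sup>T = A \<and> (\<forall>i<n. A $$ (i, i) = 0)"

definition edge_rel :: "nat \<Rightarrow> real mat \<Rightarrow> (nat \<times> nat) set" where
  "edge_rel n A = {(i, j). i < n \<and> j < n \<and> A $$ (i, j) \<noteq> 0}"

definition connected_sg :: "nat \<Rightarrow> real mat \<Rightarrow> bool" where
  "connected_sg n A \<longleftrightarrow> (\<forall>i<n. \<forall>j<n. (i, j) \<in> (edge_rel n A)\<^sup>*)"

definition sdeg :: "nat \<Rightarrow> real mat \<Rightarrow> nat \<Rightarrow> real" where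
  "sdeg n A i = (\<Sum>j<n. \<bar>A $$ (i, j)\<bar>)"

definition norm_signed_laplacian :: "nat \<Rightarrow> real mat \<Rightarrow> real mat" where
  "norm_signed_laplacian n A =
     1\<^sub>m n - mat n n (\<lambda>(i, j). if i = j then 1 / sdeg n A i else 0) * A"

definition structurally_balanced :: "nat \<Rightarrow> real mat \<Rightarrow> bool" where
  "structurally_balanced n A \<longleftrightarrow>
     (\<exists>s :: nat \<Rightarrow> real. (\<forall>i<n. s i = 1 \<or> s i = -1) \<and>
        (\<forall>i<n. \<forall>j<n. (mat n n (\<lambda>(i, j). if i = j then s i else 0) * A
                          * mat n n (\<lambda>(i, j). if i = j then s i else 0)) $$ (i, j) \<ge> 0))"

text \<open>Eigenvalues (with algebraic multiplicity) in nondecreasing order, as the sorted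
  list of the real roots of the characteristic polynomial; for the matrices considered
  all eigenvalues are real. lambda k (1-indexed) is the k-th smallest.\<close>
definition sorted_eigenvalues :: "real mat \<Rightarrow> real list" where
  "sorted_eigenvalues M = sorted_list_of_multiset (proots (char_poly M))"

definition eig_lambda :: "real mat \<Rightarrow> nat \<Rightarrow> real" where
  "eig_lambda M k = sorted_eigenvalues M ! (k - 1)"

end

theory Submission
  imports Defs
begin

text \<open>
  With \<open>r i = sqrt (sdeg n A i)\<close>, the normalized Laplacian is similar to \<open>I - N\<close>, where
  \<open>N i j = A i j / (r i * r j)\<close> is symmetric.  By the spectral theorem the eigenvalues of
  \<open>L\<close> are \<open>1 - d i\<close> for the eigenvalues \<open>d i\<close> of \<open>N\<close>.  If \<open>\<lambda>\<^sub>2(L) \<ge> 1\<close>, then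
  \<open>N\<close> has at most one positive eigenvalue, so its quadratic form is bounded by a rank-one
  form \<open>(v \<bullet> x)\<^sup>2\<close>, and after rescaling the same holds for \<open>A\<close>.  Testing that bound on
  vectors supported on two nodes \<open>i, j\<close> shows \<open>A i j = 0\<close> or \<open>v i v j A i j > 0\<close>;
  hence the signs of \<open>v\<close> form a balancing signature.
\<close>

section \<open>Diagonal matrices and their spectra\<close>

definition diag_matrix :: "nat \<Rightarrow> (nat \<Rightarrow> 'a::zero) \<Rightarrow> 'a mat" where
  "diag_matrix n d = mat n n (\<lambda>(i, j). if i = j then d i else 0)"

lemma diag_matrix_carrier [simp]: "diag_matrix n d \<in> carrier_mat n n"
  and dim_diag_matrix [simp]: "dim_row (diag_matrix n d) = n" "dim_col (diag_matrix n d) = n"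
  by (simp_all add: diag_matrix_def)

lemma index_diag_matrix_mult:
  fixes X :: "'a::semiring_0 mat"
  assumes "X \<in> carrier_mat n m" "i < n" "j < m"
  shows "(diag_matrix n a * X) $$ (i, j) = a i * X $$ (i, j)"
  using assms by (simp add: scalar_prod_def diag_matrix_def if_distrib[of "\<lambda>x. x * _"] cong: if_cong)

lemma index_mult_diag_matrix:
  fixes X :: "'a::semiring_0 mat"
  assumes "X \<in> carrier_mat m n" "i < m" "j < n"
  shows "(X * diag_matrix n a) $$ (i, j) = X $$ (i, j) * a j"
  using assms by (simp add: scalar_prod_def diag_matrix_def if_distrib[of "\<lambda>x. _ * x"] cong: if_cong)

lemma diag_matrix_mult_diag_matrix:
  "diag_matrix n a * diag_matrix n b = diag_matrix n (\<lambda>i. a i * b i :: 'a::semiring_0)"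
proof (rule eq_matI)
  fix i j assume "i < dim_row (diag_matrix n (\<lambda>i. a i * b i))" "j < dim_col (diag_matrix n (\<lambda>i. a i * b i))"
  then show "(diag_matrix n a * diag_matrix n b) $$ (i, j) = diag_matrix n (\<lambda>i. a i * b i) $$ (i, j)"
    by (subst index_diag_matrix_mult[of _ n n]) (auto simp: diag_matrix_def)
qed auto

lemma char_poly_diag_matrix:
  "char_poly (diag_matrix n d) = (\<Prod>a\<leftarrow>map d [0..<n]. [:- a, 1:] :: 'a::comm_ring_1 poly)"
proof -
  have "diag_mat (diag_matrix n d) = map d [0..<n]"
    by (auto simp: diag_mat_def diag_matrix_def intro: nth_equalityI)
  then show ?thesis
    by (subst char_poly_upper_triangular[OF diag_matrix_carrier])
      (auto simp: upper_triangular_def diag_matrix_def)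
qed

lemma proots_prod_linear_factors: "proots (\<Prod>a\<leftarrow>xs. [:- a, 1:]) = mset (xs :: 'a::idom list)"
proof (induction xs)
  case (Cons a xs)
  have "(\<Prod>a\<leftarrow>xs. [:- a, 1:]) \<noteq> (0 :: 'a poly)"
    by auto
  then have "proots (\<Prod>a\<leftarrow>a # xs. [:- a, 1:]) = proots [:- a, 1:] + proots (\<Prod>a\<leftarrow>xs. [:- a, 1:])"
    unfolding list.map prod_list.Cons by (intro proots_mult) auto
  then show ?case
    using Cons proots_linear_factor[of "-a"] by simp
qed simp

lemma sorted_eigenvalues_similar_diag_matrix:
  assumes "similar_mat M (diag_matrix n d)"
  shows "sorted_eigenvalues M = sort (map d [0..<n])"
  unfolding sorted_eigenvalues_def char_poly_similar[OF assms] char_poly_diag_matrix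
    proots_prod_linear_factors sorted_list_of_multiset_mset ..

lemma sort_nth_1_less:
  fixes f :: "nat \<Rightarrow> 'a::linorder"
  assumes ij: "i < n" "j < n" "i \<noteq> j" and "f i < c" "f j < c"
  shows "sort (map f [0..<n]) ! 1 < c"
proof (rule ccontr)
  define ys where "ys = sort (map f [0..<n])"
  assume "\<not> sort (map f [0..<n]) ! 1 < c"
  then have "c \<le> ys ! 1" unfolding ys_def by simp
  have "k = 0" if "k < length ys" "ys ! k < c" for k
  proof (rule ccontr)
    assume "k \<noteq> 0"
    then have "ys ! 1 \<le> ys ! k"
      using that sorted_nth_mono[of ys 1 k] unfolding ys_def by simp
    then show False using that \<open>c \<le> ys ! 1\<close> by simp
  qed
  then have "{k. k < length ys \<and> ys ! k < c} \<subseteq> {0}"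
    by blast
  then have "card {k. k < length ys \<and> ys ! k < c} \<le> card {0 :: nat}"
    by (intro card_mono) simp_all
  then have "length (filter (\<lambda>x. x < c) ys) \<le> 1"
    unfolding length_filter_conv_card by simp
  moreover have "length (filter (\<lambda>x. x < c) (map f [0..<n])) \<ge> 2"
  proof -
    have "card {i, j} \<le> card {k. k < length (map f [0..<n]) \<and> map f [0..<n] ! k < c}"
      using assms by (intro card_mono) auto
    then show ?thesis
      unfolding length_filter_conv_card using \<open>i \<noteq> j\<close> by simp
  qed
  ultimately show False
    unfolding ys_def filter_sort by simp
qed

section \<open>Spectral theorem for real symmetric matrices\<close>

lemma cnj_hermitian_form_real_symmetric:
  fixes M :: "real mat" and v :: "complex vec"
  assumes M: "M \<in> carrier_mat n n" and sym: "M\<^sup>T = M"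
  shows "cnj (\<Sum>i<n. \<Sum>j<n. cnj (v $ i) * of_real (M $$ (i, j)) * v $ j)
       = (\<Sum>i<n. \<Sum>j<n. cnj (v $ i) * of_real (M $$ (i, j)) * v $ j)"
proof -
  have "cnj (\<Sum>i<n. \<Sum>j<n. cnj (v $ i) * of_real (M $$ (i, j)) * v $ j)
      = (\<Sum>i<n. \<Sum>j<n. v $ i * of_real (M $$ (i, j)) * cnj (v $ j))"
    by simp
  also have "\<dots> = (\<Sum>j<n. \<Sum>i<n. v $ i * of_real (M $$ (i, j)) * cnj (v $ j))"
    by (rule sum.swap)
  also have "\<dots> = (\<Sum>i<n. \<Sum>j<n. cnj (v $ i) * of_real (M $$ (i, j)) * v $ j)"
  proof (intro sum.cong refl)
    fix i j assume "i \<in> {..<n}" "j \<in> {..<n}"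
    then have "M $$ (j, i) = M $$ (i, j)"
      using M sym by (metis carrier_matD index_transpose_mat(1) lessThan_iff)
    then show "v $ j * of_real (M $$ (j, i)) * cnj (v $ i) = cnj (v $ i) * of_real (M $$ (i, j)) * v $ j"
      by simp
  qed
  finally show ?thesis .
qed

lemma complex_eigenvalue_real_symmetric_is_real:
  fixes M :: "real mat" and v :: "complex vec"
  assumes M: "M \<in> carrier_mat n n" and sym: "M\<^sup>T = M"
    and ev: "eigenvector (map_mat of_real M) v a"
  shows "a \<in> \<real>"
proof -
  define s where "s = (\<Sum>i<n. \<Sum>j<n. cnj (v $ i) * of_real (M $$ (i, j)) * v $ j)"
  define r where "r = (\<Sum>i<n. (cmod (v $ i))\<^sup>2)"
  have v: "v \<in> carrier_vec n" "v \<noteq> 0\<^sub>v n" "map_mat of_real M *\<^sub>v v = a \<cdot>\<^sub>v v"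
    using ev M unfolding eigenvector_def by auto
  have Mv: "(map_mat of_real M *\<^sub>v v) $ i = (\<Sum>j<n. of_real (M $$ (i, j)) * v $ j)" if "i < n" for i
    using that M v(1) by (auto simp: scalar_prod_def lessThan_atLeast0 intro!: sum.cong)
  have "s = (\<Sum>i<n. cnj (v $ i) * (map_mat of_real M *\<^sub>v v) $ i)"
    unfolding s_def by (simp add: Mv sum_distrib_left mult.assoc)
  also have "\<dots> = a * (\<Sum>i<n. cnj (v $ i) * v $ i)"
    using v by (simp add: sum_distrib_left algebra_simps)
  also have "(\<Sum>i<n. cnj (v $ i) * v $ i) = of_real r"
    unfolding r_def of_real_sum
    by (intro sum.cong refl, subst complex_norm_square) (simp add: mult.commute)
  finally have s: "s = a * of_real r" .
  obtain i where i: "i < n" "v $ i \<noteq> 0"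
    using v by (metis eq_vecI carrier_vecD index_zero_vec)
  have "r > 0"
    unfolding r_def by (rule sum_pos2[of _ i]) (use i in auto)
  moreover have "cnj s = s"
    unfolding s_def by (rule cnj_hermitian_form_real_symmetric[OF M sym])
  then have "cnj a * of_real r = a * of_real r"
    using s by (metis complex_cnj_complex_of_real complex_cnj_mult)
  ultimately have "cnj a = a" by simp
  then show ?thesis using Reals_cnj_iff by blast
qed

lemma real_symmetric_mat_eigenvector:
  fixes M :: "real mat"
  assumes M: "M \<in> carrier_mat n n" and sym: "M\<^sup>T = M" and n: "n > 0"
  obtains \<mu> v where "v \<in> carrier_vec n" "v \<noteq> 0\<^sub>v n" "M *\<^sub>v v = \<mu> \<cdot>\<^sub>v v"
proof -
  have Mc: "map_mat complex_of_real M \<in> carrier_mat n n" using M by simp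
  obtain as where cp: "char_poly (map_mat complex_of_real M) = (\<Prod>a\<leftarrow>as. [:- a, 1:])"
    and "length as = n"
    using char_poly_factorized[OF Mc] by blast
  then obtain a where "a \<in> set as" using n by (cases as) auto
  then have root: "poly (char_poly (map_mat complex_of_real M)) a = 0"
    unfolding cp poly_prod_list prod_list_zero_iff by auto
  then obtain w where "eigenvector (map_mat complex_of_real M) w a"
    using eigenvalue_root_char_poly[OF Mc] unfolding eigenvalue_def by blast
  then have a: "a = of_real (Re a)"
    using complex_eigenvalue_real_symmetric_is_real[OF M sym] by simp
  have "poly (map_poly complex_of_real (char_poly M)) (of_real (Re a)) = 0"
    using root a of_real_hom.char_poly_hom[OF M] by metis
  then have "poly (char_poly M) (Re a) = 0"
    by (simp add: of_real_hom.poly_map_poly)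
  then obtain v where "eigenvector M v (Re a)"
    using eigenvalue_root_char_poly[OF M] unfolding eigenvalue_def by blast
  then show ?thesis
    using that M unfolding eigenvector_def by auto
qed

lemma scalar_prod_self_pos:
  fixes v :: "real vec"
  assumes "v \<noteq> 0\<^sub>v (dim_vec v)"
  shows "v \<bullet> v > 0"
  using assms conjugate_square_greater_0_vec[of v "dim_vec v"] by simp

definition householder_mat :: "real vec \<Rightarrow> real mat" where
  "householder_mat w = mat (dim_vec w) (dim_vec w)
     (\<lambda>(i, j). (if i = j then 1 else 0) - 2 / (w \<bullet> w) * w $ i * w $ j)"

lemma householder_mat_carrier: "householder_mat w \<in> carrier_mat (dim_vec w) (dim_vec w)"
  and dim_householder_mat [simp]:
    "dim_row (householder_mat w) = dim_vec w" "dim_col (householder_mat w) = dim_vec w"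
  by (simp_all add: householder_mat_def)

lemma transpose_householder_mat: "(householder_mat w)\<^sup>T = householder_mat w"
  by (rule eq_matI) (auto simp: householder_mat_def)

lemma householder_mat_mult_vec:
  assumes "x \<in> carrier_vec (dim_vec w)"
  shows "householder_mat w *\<^sub>v x = x - (2 * (w \<bullet> x) / (w \<bullet> w)) \<cdot>\<^sub>v w"
proof (rule eq_vecI)
  fix i assume "i < dim_vec (x - (2 * (w \<bullet> x) / (w \<bullet> w)) \<cdot>\<^sub>v w)"
  then have i: "i < dim_vec w" using assms by simp
  have "(householder_mat w *\<^sub>v x) $ i
      = (\<Sum>j = 0..<dim_vec w. (if i = j then x $ j else 0) - 2 / (w \<bullet> w) * w $ i * (w $ j * x $ j))"
    using i assms by (auto simp: householder_mat_def scalar_prod_def left_diff_distrib intro!: sum.cong)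
  also have "\<dots> = x $ i - 2 / (w \<bullet> w) * w $ i * (w \<bullet> x)"
    using i assms by (simp add: sum_subtractf sum_distrib_left scalar_prod_def[of w x])
  finally show "(householder_mat w *\<^sub>v x) $ i = (x - (2 * (w \<bullet> x) / (w \<bullet> w)) \<cdot>\<^sub>v w) $ i"
    using i assms by (simp add: ac_simps)
qed (use assms in \<open>simp add: householder_mat_def\<close>)

lemma householder_mat_involution:
  assumes "w \<noteq> 0\<^sub>v (dim_vec w)"
  shows "householder_mat w * householder_mat w = 1\<^sub>m (dim_vec w)"
proof (rule eq_matI)
  define N c where "N = dim_vec w" and "c = 2 / (w \<bullet> w)"
  have "w \<bullet> w > 0"
    using scalar_prod_self_pos[OF assms] .
  then have cww: "c * (w \<bullet> w) = 2" by (simp add: c_def)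
  fix i j assume "i < dim_row (1\<^sub>m (dim_vec w))" "j < dim_col (1\<^sub>m (dim_vec w))"
  then have ij: "i < N" "j < N" by (auto simp: N_def)
  have H: "householder_mat w $$ (a, b) = (if a = b then 1 else 0) - c * w $ a * w $ b"
    if "a < N" "b < N" for a b
    using that by (simp add: householder_mat_def N_def c_def)
  have "(householder_mat w * householder_mat w) $$ (i, j)
      = (\<Sum>k = 0..<N. householder_mat w $$ (i, k) * householder_mat w $$ (k, j))"
    using ij by (simp add: scalar_prod_def N_def)
  also have "\<dots> = (\<Sum>k = 0..<N. (if k = i then (if i = j then 1 else 0) else 0)
         - (if k = i then c * w $ k * w $ j else 0) - (if k = j then c * w $ i * w $ k else 0)
         + c * c * w $ i * w $ j * (w $ k * w $ k))"
    using ij by (intro sum.cong refl) (auto simp: H algebra_simps)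
  also have "\<dots> = (if i = j then 1 else 0) - 2 * c * w $ i * w $ j + c * c * w $ i * w $ j * (w \<bullet> w)"
    using ij by (simp add: sum.distrib sum_subtractf sum_distrib_left scalar_prod_def N_def)
  also have "\<dots> = (if i = j then 1 else 0)"
    using cww by (simp add: algebra_simps)
  finally show "(householder_mat w * householder_mat w) $$ (i, j) = 1\<^sub>m (dim_vec w) $$ (i, j)"
    using ij by (simp add: N_def)
qed (simp_all add: householder_mat_def)

lemma householder_mat_unit_vec:
  fixes q :: "real vec"
  assumes q: "q \<in> carrier_vec N" and unit: "q \<bullet> q = 1" and N: "N > 0"
    and neq: "unit_vec N 0 - q \<noteq> 0\<^sub>v N"
  shows "householder_mat (unit_vec N 0 - q) *\<^sub>v unit_vec N 0 = q"
proof -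
  define w where "w = unit_vec N 0 - q"
  have w: "w \<in> carrier_vec N" using q by (simp add: w_def)
  have we: "w \<bullet> unit_vec N 0 = 1 - q $ 0"
    using q N by (simp add: w_def minus_scalar_prod_distrib)
  have "w \<bullet> q = q $ 0 - 1"
    unfolding w_def using q N unit by (subst minus_scalar_prod_distrib[of _ N]) auto
  moreover have "w \<bullet> (unit_vec N 0 - q) = w \<bullet> unit_vec N 0 - w \<bullet> q"
    using w q by (intro scalar_prod_minus_distrib) auto
  ultimately have ww: "w \<bullet> w = 2 * (1 - q $ 0)"
    using we by (simp add: w_def[symmetric])
  have "w \<bullet> w > 0"
    by (rule scalar_prod_self_pos) (use neq q in \<open>simp add: w_def\<close>)
  then have "2 * (w \<bullet> unit_vec N 0) / (w \<bullet> w) = 1"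
    unfolding we ww by simp
  moreover have "unit_vec N 0 - w = q"
    using q by (intro eq_vecI) (auto simp: w_def)
  ultimately show ?thesis
    using w by (simp add: householder_mat_mult_vec w_def[symmetric])
qed

lemma reflection_to_unit_vec:
  fixes q :: "real vec"
  assumes q: "q \<in> carrier_vec N" and unit: "q \<bullet> q = 1" and N: "N > 0"
  obtains H where "H \<in> carrier_mat N N" "H\<^sup>T = H" "H * H = 1\<^sub>m N" "H *\<^sub>v unit_vec N 0 = q"
proof (cases "unit_vec N 0 - q = 0\<^sub>v N")
  case True
  have "q = unit_vec N 0"
  proof (rule eq_vecI)
    fix i assume "i < dim_vec (unit_vec N 0)"
    then have "(unit_vec N 0 - q) $ i = 0" using True by simp
    then show "q $ i = unit_vec N 0 $ i" using q \<open>i < dim_vec (unit_vec N 0)\<close> by simp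
  qed (use q in simp)
  then show ?thesis using that[of "1\<^sub>m N"] by simp
next
  case False
  show ?thesis
  proof (rule that)
    show "householder_mat (unit_vec N 0 - q) \<in> carrier_mat N N"
      using householder_mat_carrier[of "unit_vec N 0 - q"] q by simp
    show "householder_mat (unit_vec N 0 - q) * householder_mat (unit_vec N 0 - q) = 1\<^sub>m N"
      using householder_mat_involution[of "unit_vec N 0 - q"] False q by simp
  qed (simp_all add: transpose_householder_mat householder_mat_unit_vec[OF q unit N False])
qed

lemma symmetric_mat_eigen_unit_vec_block:
  fixes M :: "real mat"
  assumes M: "M \<in> carrier_mat (Suc n) (Suc n)" and sym: "M\<^sup>T = M"
    and eigen: "M *\<^sub>v unit_vec (Suc n) 0 = \<mu> \<cdot>\<^sub>v unit_vec (Suc n) 0"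
  defines "M' \<equiv> mat n n (\<lambda>(i, j). M $$ (Suc i, Suc j))"
  shows "M = four_block_mat (mat 1 1 (\<lambda>_. \<mu>)) (0\<^sub>m 1 n) (0\<^sub>m n 1) M'" and "M'\<^sup>T = M'"
proof -
  have col0: "M $$ (i, 0) = (if i = 0 then \<mu> else 0)" if "i < Suc n" for i
  proof -
    have "M $$ (i, 0) = (M *\<^sub>v unit_vec (Suc n) 0) $ i" using that M by (simp add: row_def)
    then show ?thesis using eigen that by simp
  qed
  have row0: "M $$ (0, j) = (if j = 0 then \<mu> else 0)" if "j < Suc n" for j
  proof -
    have "M $$ (0, j) = M\<^sup>T $$ (j, 0)" using that M by simp
    then show ?thesis using col0[OF that] sym by simp
  qed
  show "M = four_block_mat (mat 1 1 (\<lambda>_. \<mu>)) (0\<^sub>m 1 n) (0\<^sub>m n 1) M'"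
  proof (rule eq_matI)
    fix i j assume "i < dim_row (four_block_mat (mat 1 1 (\<lambda>_. \<mu>)) (0\<^sub>m 1 n) (0\<^sub>m n 1) M')"
      "j < dim_col (four_block_mat (mat 1 1 (\<lambda>_. \<mu>)) (0\<^sub>m 1 n) (0\<^sub>m n 1) M')"
    then have "i < Suc n" "j < Suc n" by (auto simp: M'_def)
    then show "M $$ (i, j) = four_block_mat (mat 1 1 (\<lambda>_. \<mu>)) (0\<^sub>m 1 n) (0\<^sub>m n 1) M' $$ (i, j)"
      using col0 row0 by (cases i; cases j) (auto simp: M'_def)
  qed (use M in \<open>auto simp: M'_def\<close>)
  show "M'\<^sup>T = M'"
  proof (rule eq_matI)
    fix i j assume ij: "i < dim_row M'" "j < dim_col M'"
    then have "M $$ (Suc j, Suc i) = M\<^sup>T $$ (Suc i, Suc j)" using M by (simp add: M'_def)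
    then show "M'\<^sup>T $$ (i, j) = M' $$ (i, j)" using sym ij by (simp add: M'_def)
  qed (simp_all add: M'_def)
qed

lemma symmetric_mat_deflation:
  fixes M :: "real mat"
  assumes M: "M \<in> carrier_mat (Suc n) (Suc n)" and sym: "M\<^sup>T = M"
  obtains H \<mu> M' where "H \<in> carrier_mat (Suc n) (Suc n)" "H\<^sup>T = H" "H * H = 1\<^sub>m (Suc n)"
    "M' \<in> carrier_mat n n" "M'\<^sup>T = M'"
    "H * M * H = four_block_mat (mat 1 1 (\<lambda>_. \<mu>)) (0\<^sub>m 1 n) (0\<^sub>m n 1) M'"
proof -
  obtain \<mu> v where v: "v \<in> carrier_vec (Suc n)" "v \<noteq> 0\<^sub>v (Suc n)" "M *\<^sub>v v = \<mu> \<cdot>\<^sub>v v"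
    using real_symmetric_mat_eigenvector[OF M sym] by blast
  have "v \<bullet> v > 0" using scalar_prod_self_pos[of v] v by simp
  define q where "q = (1 / sqrt (v \<bullet> v)) \<cdot>\<^sub>v v"
  have q: "q \<in> carrier_vec (Suc n)" using v by (simp add: q_def)
  have "q \<bullet> q = 1" using \<open>v \<bullet> v > 0\<close> v(1) unfolding q_def
    by (simp add: smult_scalar_prod_distrib scalar_prod_smult_distrib)
  moreover have Mq: "M *\<^sub>v q = \<mu> \<cdot>\<^sub>v q" using v M unfolding q_def
    by (simp add: mult_mat_vec smult_smult_assoc mult.commute)
  ultimately obtain H where H: "H \<in> carrier_mat (Suc n) (Suc n)" and HT: "H\<^sup>T = H"
    and HH: "H * H = 1\<^sub>m (Suc n)" and He: "H *\<^sub>v unit_vec (Suc n) 0 = q"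
    using reflection_to_unit_vec[OF q] by blast
  define e :: "real vec" where "e = unit_vec (Suc n) 0"
  define M' where "M' = mat n n (\<lambda>(i, j). (H * M * H) $$ (Suc i, Suc j))"
  have "H *\<^sub>v q = (H * H) *\<^sub>v e"
    unfolding He[symmetric] e_def using H by (simp add: assoc_mult_mat_vec[OF H H])
  then have Hq: "H *\<^sub>v q = e"
    unfolding HH by (simp add: e_def)
  have "H * M * H *\<^sub>v e = H *\<^sub>v (M *\<^sub>v (H *\<^sub>v e))"
    unfolding e_def using H M by (simp add: assoc_mult_mat_vec[of _ "Suc n" "Suc n" _ "Suc n"])
  also have "\<dots> = \<mu> \<cdot>\<^sub>v e"
    using He Mq Hq H q unfolding e_def[symmetric] by (simp add: mult_mat_vec)
  finally have "H * M * H *\<^sub>v unit_vec (Suc n) 0 = \<mu> \<cdot>\<^sub>v unit_vec (Suc n) 0"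
    unfolding e_def .
  moreover have "H * M * H \<in> carrier_mat (Suc n) (Suc n)" using H M by simp
  moreover have "(H * M * H)\<^sup>T = H * M * H" using H M HT sym
    by (simp add: transpose_mult[of _ "Suc n" "Suc n" _ "Suc n"] assoc_mult_mat[of _ "Suc n" "Suc n" _ "Suc n" _ "Suc n"])
  ultimately have "H * M * H = four_block_mat (mat 1 1 (\<lambda>_. \<mu>)) (0\<^sub>m 1 n) (0\<^sub>m n 1) M'" "M'\<^sup>T = M'"
    using symmetric_mat_eigen_unit_vec_block[of "H * M * H" n \<mu>] unfolding M'_def by blast+
  moreover have "M' \<in> carrier_mat n n" by (simp add: M'_def)
  ultimately show ?thesis
    using that[OF H HT HH] by blast
qed

lemma block_spectral_decomposition:
  fixes U' :: "real mat"
  assumes U': "U' \<in> carrier_mat n n" and U'U': "U'\<^sup>T * U' = 1\<^sub>m n"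
  defines "B \<equiv> four_block_mat (1\<^sub>m 1) (0\<^sub>m 1 n) (0\<^sub>m n 1) U'"
  shows "B \<in> carrier_mat (Suc n) (Suc n)" and "B\<^sup>T * B = 1\<^sub>m (Suc n)"
    and "four_block_mat (mat 1 1 (\<lambda>_. \<mu>)) (0\<^sub>m 1 n) (0\<^sub>m n 1) (U' * diag_matrix n d' * U'\<^sup>T)
      = B * diag_matrix (Suc n) (\<lambda>i. if i = 0 then \<mu> else d' (i - 1)) * B\<^sup>T"
proof -
  have BT: "B\<^sup>T = four_block_mat (1\<^sub>m 1) (0\<^sub>m 1 n) (0\<^sub>m n 1) U'\<^sup>T"
    unfolding B_def using U' by (subst transpose_four_block_mat[of _ 1 1 _ n _ n]) auto
  show "B \<in> carrier_mat (Suc n) (Suc n)"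
    using U' four_block_carrier_mat[of "1\<^sub>m 1" 1 1 U' n n] by (simp add: B_def)
  show "B\<^sup>T * B = 1\<^sub>m (Suc n)"
    unfolding BT unfolding B_def using U' U'U'
    by (subst mult_four_block_mat[of _ 1 1 _ n _ n _ _ 1 _ n]) auto
  have D: "diag_matrix (Suc n) (\<lambda>i. if i = 0 then \<mu> else d' (i - 1))
      = four_block_mat (mat 1 1 (\<lambda>_. \<mu>)) (0\<^sub>m 1 n) (0\<^sub>m n 1) (diag_matrix n d')"
    by (rule eq_matI) (auto simp: diag_matrix_def)
  have "B * diag_matrix (Suc n) (\<lambda>i. if i = 0 then \<mu> else d' (i - 1))
      = four_block_mat (mat 1 1 (\<lambda>_. \<mu>)) (0\<^sub>m 1 n) (0\<^sub>m n 1) (U' * diag_matrix n d')"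
    unfolding D B_def using U'
    by (subst mult_four_block_mat[of _ 1 1 _ n _ n _ _ 1 _ n]) auto
  also have "\<dots> * B\<^sup>T
      = four_block_mat (mat 1 1 (\<lambda>_. \<mu>)) (0\<^sub>m 1 n) (0\<^sub>m n 1) (U' * diag_matrix n d' * U'\<^sup>T)"
    unfolding BT using U'
    by (subst mult_four_block_mat[of _ 1 1 _ n _ n _ _ 1 _ n]) auto
  finally show "four_block_mat (mat 1 1 (\<lambda>_. \<mu>)) (0\<^sub>m 1 n) (0\<^sub>m n 1) (U' * diag_matrix n d' * U'\<^sup>T)
      = B * diag_matrix (Suc n) (\<lambda>i. if i = 0 then \<mu> else d' (i - 1)) * B\<^sup>T" ..
qed

lemma spectral_decomposition:
  fixes M :: "real mat"
  assumes "M \<in> carrier_mat n n" "M\<^sup>T = M"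
  shows "\<exists>U d. U \<in> carrier_mat n n \<and> U\<^sup>T * U = 1\<^sub>m n \<and> M = U * diag_matrix n d * U\<^sup>T"
  using assms
proof (induction n arbitrary: M)
  case 0
  then show ?case
    by (intro exI[of _ "1\<^sub>m 0"] exI[of _ "\<lambda>_. 0"]) (auto intro!: eq_matI)
next
  case (Suc n)
  obtain H \<mu> M' where H: "H \<in> carrier_mat (Suc n) (Suc n)" and HT: "H\<^sup>T = H"
    and HH: "H * H = 1\<^sub>m (Suc n)" and M': "M' \<in> carrier_mat n n" "M'\<^sup>T = M'"
    and HMH: "H * M * H = four_block_mat (mat 1 1 (\<lambda>_. \<mu>)) (0\<^sub>m 1 n) (0\<^sub>m n 1) M'"
    by (rule symmetric_mat_deflation[OF Suc.prems])
  obtain U' d' where U': "U' \<in> carrier_mat n n" "U'\<^sup>T * U' = 1\<^sub>m n"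
    and M'eq: "M' = U' * diag_matrix n d' * U'\<^sup>T"
    using Suc.IH[OF M'] by blast
  define B where "B = four_block_mat (1\<^sub>m 1) (0\<^sub>m 1 n) (0\<^sub>m n 1) U'"
  define D where "D = diag_matrix (Suc n) (\<lambda>i. if i = 0 then \<mu> else d' (i - 1))"
  have B: "B \<in> carrier_mat (Suc n) (Suc n)" "B\<^sup>T * B = 1\<^sub>m (Suc n)"
    and BDB: "H * M * H = B * D * B\<^sup>T"
    using block_spectral_decomposition[OF U'] unfolding HMH M'eq B_def D_def by blast+
  have D: "D \<in> carrier_mat (Suc n) (Suc n)" and BT: "B\<^sup>T \<in> carrier_mat (Suc n) (Suc n)"
    using B by (simp_all add: D_def)
  note assoc = assoc_mult_mat[of _ "Suc n" "Suc n" _ "Suc n" _ "Suc n"]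
  have "(H * B)\<^sup>T * (H * B) = B\<^sup>T * (H * H) * B"
    using H B HT by (simp add: transpose_mult assoc)
  then have "(H * B)\<^sup>T * (H * B) = 1\<^sub>m (Suc n)"
    using HH B by simp
  moreover have "(H * H) * M * (H * H) = H * (B * D * B\<^sup>T) * H"
    unfolding BDB[symmetric] using H Suc.prems(1) by (simp add: assoc)
  then have "M = (H * B) * D * (H * B)\<^sup>T"
    using HH H B D BT HT Suc.prems(1) by (simp add: transpose_mult assoc mult_carrier_mat[of _ "Suc n" "Suc n" _ "Suc n"])
  moreover have "H * B \<in> carrier_mat (Suc n) (Suc n)" using H B by simp
  ultimately show ?case
    unfolding D_def by blast
qed

section \<open>Quadratic forms and structural balance\<close>

definition quad_form :: "nat \<Rightarrow> real mat \<Rightarrow> (nat \<Rightarrow> real) \<Rightarrow> real" where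
  "quad_form n M x = (\<Sum>a<n. \<Sum>b<n. x a * M $$ (a, b) * x b)"

lemma quad_form_congruence:
  assumes "\<And>a b. a < n \<Longrightarrow> b < n \<Longrightarrow> M $$ (a, b) = r a * N $$ (a, b) * r b"
  shows "quad_form n M x = quad_form n N (\<lambda>a. r a * x a)"
  unfolding quad_form_def using assms by (auto simp: ac_simps intro!: sum.cong)

lemma index_mult_diag_matrix_transpose:
  fixes U :: "'a::comm_semiring_0 mat"
  assumes U: "U \<in> carrier_mat n n" and "a < n" "b < n"
  shows "(U * diag_matrix n d * U\<^sup>T) $$ (a, b) = (\<Sum>l<n. U $$ (a, l) * d l * U $$ (b, l))"
proof -
  have "(U * diag_matrix n d * U\<^sup>T) $$ (a, b) = (\<Sum>l = 0..<n. (U * diag_matrix n d) $$ (a, l) * U $$ (b, l))"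
    using assms by (simp add: scalar_prod_def)
  also have "\<dots> = (\<Sum>l<n. U $$ (a, l) * d l * U $$ (b, l))"
    unfolding lessThan_atLeast0 using assms
    by (intro sum.cong refl) (simp add: index_mult_diag_matrix[OF U] del: index_mult_mat)
  finally show ?thesis .
qed

lemma quad_form_mult_diag_matrix_transpose:
  assumes U: "U \<in> carrier_mat n n"
  shows "quad_form n (U * diag_matrix n d * U\<^sup>T) x = (\<Sum>l<n. d l * (\<Sum>a<n. U $$ (a, l) * x a)\<^sup>2)"
proof -
  define y where "y l a = U $$ (a, l) * x a" for l a
  have "quad_form n (U * diag_matrix n d * U\<^sup>T) x = (\<Sum>a<n. \<Sum>b<n. \<Sum>l<n. d l * y l a * y l b)"
    unfolding quad_form_def y_def using U
    by (intro sum.cong refl) (simp add: index_mult_diag_matrix_transpose sum_distrib_left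
        sum_distrib_right ac_simps del: index_mult_mat)
  also have "\<dots> = (\<Sum>a<n. \<Sum>l<n. \<Sum>b<n. d l * y l a * y l b)"
    by (intro sum.cong refl sum.swap)
  also have "\<dots> = (\<Sum>l<n. \<Sum>a<n. \<Sum>b<n. d l * y l a * y l b)"
    by (rule sum.swap)
  also have "\<dots> = (\<Sum>l<n. d l * (\<Sum>a<n. y l a)\<^sup>2)"
  proof (intro sum.cong refl)
    fix l
    have "(\<Sum>a<n. y l a)\<^sup>2 = (\<Sum>a<n. \<Sum>b<n. y l a * y l b)"
      by (simp add: power2_eq_square sum_product)
    then show "(\<Sum>a<n. \<Sum>b<n. d l * y l a * y l b) = d l * (\<Sum>a<n. y l a)\<^sup>2"
      by (simp add: sum_distrib_left mult.assoc)
  qed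
  finally show ?thesis unfolding y_def .
qed

lemma quad_form_le_square_single_positive:
  assumes U: "U \<in> carrier_mat n n" and nonpos: "\<And>l. l < n \<Longrightarrow> l \<noteq> k \<Longrightarrow> d l \<le> 0"
  obtains v where "\<And>x. quad_form n (U * diag_matrix n d * U\<^sup>T) x \<le> (\<Sum>a<n. v a * x a)\<^sup>2"
proof
  fix x
  define z where "z l = (\<Sum>a<n. U $$ (a, l) * x a)" for l
  have "quad_form n (U * diag_matrix n d * U\<^sup>T) x = (\<Sum>l<n. d l * (z l)\<^sup>2)"
    unfolding z_def by (rule quad_form_mult_diag_matrix_transpose[OF U])
  also have "\<dots> \<le> (\<Sum>l<n. if l = k then max (d k) 0 * (z k)\<^sup>2 else 0)"
    using nonpos by (intro sum_mono) (auto intro: mult_right_mono mult_nonpos_nonneg)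
  also have "\<dots> \<le> max (d k) 0 * (z k)\<^sup>2"
    by simp
  also have "\<dots> = (\<Sum>a<n. (sqrt (max (d k) 0) * U $$ (a, k)) * x a)\<^sup>2"
  proof -
    have "(\<Sum>a<n. (sqrt (max (d k) 0) * U $$ (a, k)) * x a) = sqrt (max (d k) 0) * z k"
      by (simp add: z_def sum_distrib_left ac_simps)
    then show ?thesis by (simp add: power_mult_distrib)
  qed
  finally show "quad_form n (U * diag_matrix n d * U\<^sup>T) x
    \<le> (\<Sum>a<n. (sqrt (max (d k) 0) * U $$ (a, k)) * x a)\<^sup>2" .
qed

lemma sum_mult_two_point:
  fixes f :: "nat \<Rightarrow> real"
  assumes "i < n" "j < n" "i \<noteq> j"
  shows "(\<Sum>a<n. f a * (if a = i then t else if a = j then r else 0)) = f i * t + f j * r"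
proof -
  have "(\<Sum>a<n. f a * (if a = i then t else if a = j then r else 0))
      = (\<Sum>a<n. (if a = i then f i * t else 0) + (if a = j then f j * r else 0))"
    using assms by (intro sum.cong) auto
  then show ?thesis using assms by (simp add: sum.distrib)
qed

lemma quad_form_two_point:
  assumes "i < n" "j < n" "i \<noteq> j"
  shows "quad_form n M (\<lambda>a. if a = i then t else if a = j then r else 0)
       = t * t * M $$ (i, i) + t * r * M $$ (i, j) + r * t * M $$ (j, i) + r * r * M $$ (j, j)"
proof -
  let ?x = "\<lambda>a. if a = i then t else if a = j then r else 0"
  have "(\<Sum>b<n. ?x a * M $$ (a, b) * ?x b) = (M $$ (a, i) * t + M $$ (a, j) * r) * ?x a" for a
    using sum_mult_two_point[OF assms, of "\<lambda>b. ?x a * M $$ (a, b)"] by (simp add: algebra_simps)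
  then have "quad_form n M ?x = (\<Sum>a<n. (M $$ (a, i) * t + M $$ (a, j) * r) * ?x a)"
    unfolding quad_form_def by simp
  also have "\<dots> = t * t * M $$ (i, i) + t * r * M $$ (i, j) + r * t * M $$ (j, i) + r * r * M $$ (j, j)"
    unfolding sum_mult_two_point[OF assms] by (simp add: algebra_simps)
  finally show ?thesis .
qed

lemma rank_one_bound_sign:
  fixes a p q :: real
  assumes bound: "\<And>t r. 2 * t * r * a \<le> (p * t + q * r)\<^sup>2"
  shows "a = 0 \<or> p * q * a > 0"
proof (cases "a = 0")
  case False
  have "p \<noteq> 0"
  proof
    assume "p = 0"
    then have "q\<^sup>2 + 1 \<le> q\<^sup>2"
      using bound[of "(q\<^sup>2 + 1) / (2 * a)" 1] False by simp
    then show False by simp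
  qed
  moreover have "q \<noteq> 0"
  proof
    assume "q = 0"
    then have "p\<^sup>2 + 1 \<le> p\<^sup>2"
      using bound[of 1 "(p\<^sup>2 + 1) / (2 * a)"] False by simp
    then show False by simp
  qed
  moreover have "p * q * a \<ge> 0"
    using bound[of q "- p"] by (simp add: algebra_simps)
  ultimately show ?thesis
    using False by (simp add: less_le)
qed simp

lemma balanced_if_quad_form_le_square:
  assumes sg: "signed_graph n A" and bound: "\<And>x. quad_form n A x \<le> (\<Sum>a<n. v a * x a)\<^sup>2"
  shows "structurally_balanced n A"
proof -
  have A: "A \<in> carrier_mat n n" and AT: "A\<^sup>T = A" and diag0: "\<And>i. i < n \<Longrightarrow> A $$ (i, i) = 0"
    using sg unfolding signed_graph_def by auto
  define s where "s i = (if v i \<ge> 0 then 1 else - 1 :: real)" for i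
  have nonneg: "s i * A $$ (i, j) * s j \<ge> 0" if ij: "i < n" "j < n" for i j
  proof (cases "i = j")
    case False
    have "A $$ (j, i) = A $$ (i, j)"
      using AT A ij by (metis carrier_matD index_transpose_mat(1))
    then have "2 * t * r * A $$ (i, j) \<le> (v i * t + v j * r)\<^sup>2" for t r
      using bound[of "\<lambda>a. if a = i then t else if a = j then r else 0"] diag0 ij
      by (simp add: quad_form_two_point[OF ij False] sum_mult_two_point[OF ij False] algebra_simps)
    then have "A $$ (i, j) = 0 \<or> v i * v j * A $$ (i, j) > 0"
      by (rule rank_one_bound_sign)
    then show ?thesis
      unfolding s_def by (auto simp: zero_less_mult_iff mult_less_0_iff)
  qed (simp add: diag0 ij)
  show ?thesis
    unfolding structurally_balanced_def diag_matrix_def[symmetric]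
  proof (intro exI[of _ s] conjI allI impI)
    fix i j assume ij: "i < n" "j < n"
    have "(diag_matrix n s * A * diag_matrix n s) $$ (i, j) = s i * A $$ (i, j) * s j"
      using A ij mult_carrier_mat[OF diag_matrix_carrier A]
      by (simp add: index_mult_diag_matrix[of _ n n] index_diag_matrix_mult[OF A] del: index_mult_mat)
    then show "0 \<le> (diag_matrix n s * A * diag_matrix n s) $$ (i, j)"
      using nonneg[OF ij] by simp
  qed (simp add: s_def)
qed

section \<open>The normalized signed Laplacian\<close>

definition normalized_adjacency :: "nat \<Rightarrow> real mat \<Rightarrow> real mat" where
  "normalized_adjacency n A =
     mat n n (\<lambda>(i, j). A $$ (i, j) / (sqrt (sdeg n A i) * sqrt (sdeg n A j)))"

lemma normalized_adjacency_carrier: "normalized_adjacency n A \<in> carrier_mat n n"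
  by (simp add: normalized_adjacency_def)

lemma transpose_normalized_adjacency:
  assumes "signed_graph n A"
  shows "(normalized_adjacency n A)\<^sup>T = normalized_adjacency n A"
proof (rule eq_matI)
  fix i j assume "i < dim_row (normalized_adjacency n A)" "j < dim_col (normalized_adjacency n A)"
  then have ij: "i < n" "j < n" by (auto simp: normalized_adjacency_def)
  have "A $$ (j, i) = A $$ (i, j)"
    using assms ij unfolding signed_graph_def by (metis carrier_matD index_transpose_mat(1))
  then show "(normalized_adjacency n A)\<^sup>T $$ (i, j) = normalized_adjacency n A $$ (i, j)"
    using ij by (simp add: normalized_adjacency_def mult.commute)
qed (simp_all add: normalized_adjacency_def)

lemma quad_form_normalized_adjacency:
  assumes "\<forall>i<n. sdeg n A i > 0"
  shows "quad_form n A x = quad_form n (normalized_adjacency n A) (\<lambda>a. sqrt (sdeg n A a) * x a)"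
proof (rule quad_form_congruence)
  fix a b assume ab: "a < n" "b < n"
  then have "sqrt (sdeg n A a) > 0" "sqrt (sdeg n A b) > 0" using assms by auto
  then show "A $$ (a, b) = sqrt (sdeg n A a) * normalized_adjacency n A $$ (a, b) * sqrt (sdeg n A b)"
    using ab by (simp add: normalized_adjacency_def)
qed

lemma norm_signed_laplacian_conj:
  assumes sg: "signed_graph n A" and pos: "\<forall>i<n. sdeg n A i > 0"
  shows "norm_signed_laplacian n A = diag_matrix n (\<lambda>i. 1 / sqrt (sdeg n A i))
           * (1\<^sub>m n - normalized_adjacency n A) * diag_matrix n (\<lambda>i. sqrt (sdeg n A i))"
    (is "_ = ?Ri * (1\<^sub>m n - ?N) * ?R")
proof (rule eq_matI)
  have A: "A \<in> carrier_mat n n" using sg by (simp add: signed_graph_def)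
  have IN: "1\<^sub>m n - ?N \<in> carrier_mat n n"
    by (rule minus_carrier_mat[OF normalized_adjacency_carrier])
  fix i j assume "i < dim_row (?Ri * (1\<^sub>m n - ?N) * ?R)" "j < dim_col (?Ri * (1\<^sub>m n - ?N) * ?R)"
  then have ij: "i < n" "j < n" by auto
  have "(?Ri * (1\<^sub>m n - ?N) * ?R) $$ (i, j)
      = 1 / sqrt (sdeg n A i) * (1\<^sub>m n - ?N) $$ (i, j) * sqrt (sdeg n A j)"
    using ij IN mult_carrier_mat[OF diag_matrix_carrier IN]
    by (simp add: index_mult_diag_matrix[of _ n n] index_diag_matrix_mult[OF IN] del: index_mult_mat)
  also have "\<dots> = (if i = j then 1 else 0) - 1 / sdeg n A i * A $$ (i, j)"
    using pos ij by (simp add: normalized_adjacency_def field_simps abs_of_pos less_imp_neq[symmetric])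
  also have "\<dots> = norm_signed_laplacian n A $$ (i, j)"
    using ij A index_diag_matrix_mult[OF A ij, of "\<lambda>i. 1 / sdeg n A i"]
    by (simp add: norm_signed_laplacian_def diag_matrix_def[symmetric])
  finally show "norm_signed_laplacian n A $$ (i, j) = (?Ri * (1\<^sub>m n - ?N) * ?R) $$ (i, j)" ..
qed (use sg in \<open>auto simp: norm_signed_laplacian_def signed_graph_def\<close>)

lemma one_minus_orthogonal_diag:
  fixes U :: "real mat"
  assumes U: "U \<in> carrier_mat n n" and UUT: "U * U\<^sup>T = 1\<^sub>m n"
  shows "1\<^sub>m n - U * diag_matrix n d * U\<^sup>T = U * diag_matrix n (\<lambda>i. 1 - d i) * U\<^sup>T"
proof -
  have "diag_matrix n (\<lambda>i. 1 - d i) = 1\<^sub>m n - diag_matrix n d"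
    by (rule eq_matI) (auto simp: diag_matrix_def)
  then have "U * diag_matrix n (\<lambda>i. 1 - d i) * U\<^sup>T = U * U\<^sup>T - U * diag_matrix n d * U\<^sup>T"
    using U by (simp add: mult_minus_distrib_mat[of U n n "1\<^sub>m n" n]
        minus_mult_distrib_mat[of U n n "U * diag_matrix n d" "U\<^sup>T" n])
  then show ?thesis using UUT by simp
qed

lemma norm_signed_laplacian_similar_diag_matrix:
  assumes sg: "signed_graph n A" and pos: "\<forall>i<n. sdeg n A i > 0"
    and U: "U \<in> carrier_mat n n" and UTU: "U\<^sup>T * U = 1\<^sub>m n"
    and N: "normalized_adjacency n A = U * diag_matrix n d * U\<^sup>T"
  shows "similar_mat (norm_signed_laplacian n A) (diag_matrix n (\<lambda>i. 1 - d i))"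
proof -
  define Ri R where "Ri = diag_matrix n (\<lambda>i. 1 / sqrt (sdeg n A i))"
    and "R = diag_matrix n (\<lambda>i. sqrt (sdeg n A i))"
  have Ri: "Ri \<in> carrier_mat n n" and R: "R \<in> carrier_mat n n" by (simp_all add: Ri_def R_def)
  have UT: "U\<^sup>T \<in> carrier_mat n n" using U by simp
  have UUT: "U * U\<^sup>T = 1\<^sub>m n" using mat_mult_left_right_inverse[OF UT U UTU] .
  have RiR: "Ri * R = 1\<^sub>m n" "R * Ri = 1\<^sub>m n"
    unfolding Ri_def R_def diag_matrix_mult_diag_matrix using pos
    by (auto simp: diag_matrix_def intro!: eq_matI)
  have L: "norm_signed_laplacian n A = Ri * U * diag_matrix n (\<lambda>i. 1 - d i) * (U\<^sup>T * R)"
    unfolding norm_signed_laplacian_conj[OF sg pos] N one_minus_orthogonal_diag[OF U UUT]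
      Ri_def[symmetric] R_def[symmetric]
    using U UT Ri R by (simp add: assoc_mult_mat[of _ n n _ n _ n] mult_carrier_mat[of _ n n _ n])
  show ?thesis
  proof (rule similar_matI[of _ _ "Ri * U" "U\<^sup>T * R" n])
    have "Ri * U * (U\<^sup>T * R) = Ri * (U * U\<^sup>T) * R"
      using U UT Ri R by (simp add: assoc_mult_mat[of _ n n _ n _ n] mult_carrier_mat[of _ n n _ n])
    then show "Ri * U * (U\<^sup>T * R) = 1\<^sub>m n" using UUT RiR Ri by simp
    have "U\<^sup>T * R * (Ri * U) = U\<^sup>T * (R * Ri) * U"
      using U UT Ri R by (simp add: assoc_mult_mat[of _ n n _ n _ n] mult_carrier_mat[of _ n n _ n])
    then show "U\<^sup>T * R * (Ri * U) = 1\<^sub>m n" using UTU RiR U by simp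
    show "{norm_signed_laplacian n A, diag_matrix n (\<lambda>i. 1 - d i), Ri * U, U\<^sup>T * R} \<subseteq> carrier_mat n n"
      using U UT Ri R by (simp add: L mult_carrier_mat[of _ n n _ n])
  qed (rule L)
qed

theorem lemma2:
  fixes n :: nat and A :: "real mat"
  assumes "signed_graph n A"
    and "connected_sg n A"
    and "\<forall>i<n. sdeg n A i > 0"
    and "\<not> structurally_balanced n A"
  shows "eig_lambda (norm_signed_laplacian n A) 2 < 1"
proof (rule ccontr)
  assume not_less: "\<not> eig_lambda (norm_signed_laplacian n A) 2 < 1"
  obtain U d where U: "U \<in> carrier_mat n n" "U\<^sup>T * U = 1\<^sub>m n"
    and N: "normalized_adjacency n A = U * diag_matrix n d * U\<^sup>T"
    using spectral_decomposition[OF normalized_adjacency_carrier transpose_normalized_adjacency[OF assms(1)]]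
    by blast
  have "eig_lambda (norm_signed_laplacian n A) 2 = sort (map (\<lambda>i. 1 - d i) [0..<n]) ! 1"
    using sorted_eigenvalues_similar_diag_matrix[OF norm_signed_laplacian_similar_diag_matrix[OF assms(1,3) U N]]
    by (simp add: eig_lambda_def)
  then have "i = j" if "i < n" "j < n" "d i > 0" "d j > 0" for i j
    using sort_nth_1_less[of i n j "\<lambda>i. 1 - d i" 1] not_less that by force
  then obtain k where "\<And>l. l < n \<Longrightarrow> l \<noteq> k \<Longrightarrow> d l \<le> 0"
    by (metis not_le)
  then obtain v where v: "\<And>x. quad_form n (normalized_adjacency n A) x \<le> (\<Sum>a<n. v a * x a)\<^sup>2"
    using quad_form_le_square_single_positive[OF U(1)] unfolding N by blast
  have "quad_form n A x \<le> (\<Sum>a<n. (v a * sqrt (sdeg n A a)) * x a)\<^sup>2" for x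
    unfolding quad_form_normalized_adjacency[OF assms(3)] mult.assoc by (rule v)
  then have "structurally_balanced n A"
    by (rule balanced_if_quad_form_le_square[OF assms(1)])
  with assms(4) show False ..
qed

end
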